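(* Let $\mathsf V$ be a variety. If $\mathsf V$ has unitary e-generalization $2$-type, then $\mathsf V$ has unitary e-generalization type.
   Context: Let $\mathsf V$ be a variety of algebras of a fixed type. For a set $X$, $\mathbf F_{\mathsf V}(X)$ denotes the free algebra of $\mathsf V$ over $X$; its elements are called terms (terms are identified up to the equational theory of $\mathsf V$). A substitution is a homomorphism between free algebras of $\mathsf V$. A symbolic e-generalization problem for $\mathsf V$ is a finite multiset $\mathbf t=\{t_1,\dots,t_m\}$ ($m\ge 1$) of elements of $\mathbf F_{\mathsf V}(X)$ for some finite $X$. A solution (generalizer) of $\mathbf t$ is a term $s\in\mathbf F_{\mathsf V}(Y)$, where $Y$ is the set of variables of $s$, such that there exist substitutions $\sigma_1,\dots,\sigma_m$ with $\sigma_k(s)=t_k$ in $\mathsf V$ for all $k$. For terms $s,u$ write $s\preceq u$ ($s$ is less general than $u$) iff there is a substitution $\sigma$ with $\sigma(u)=s$; this is a preorder on the set of solutions of $\mathbf t$, and $(\mathscr S(\mathbf t),\preceq)$ denotes the associated poset of classes of equally general solutions. In a poset $(P,\le)$ a minimal complete set is a subset $M\subseteq P$ such that every $p\in P$ has some $a\in M$ with $a\le p$, and no two distinct elements of $M$ are comparable. The e-generalization type of $\mathbf t$ is unitary if $(\mathscr S(\mathbf t),\preceq)$ has a minimal complete set of cardinality 1, finitary if it has one of finite cardinality greater than 1, infinitary if it has one of infinite cardinality, and nullary if it has none. For $m\in\mathbb N\setminus\{0\}$, the e-generalization $m$-type of $\mathsf V$ is the worst type occurring among problems for $\mathsf V$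 whose multiset has cardinality at most $m$, where the order from best to worst is unitary $>$ finitary $>$ infinitary $>$ nullary; the e-generalization type of $\mathsf V$ is the worst type among all its problems. *)

theory Defs
  imports Main "HOL-Library.Multiset"
begin

datatype 'f trm = Var nat | Fun 'f "'f trm list"

fun wf_trm :: "('f \<Rightarrow> nat) \<Rightarrow> 'f trm \<Rightarrow> bool" where
  "wf_trm ar (Var x) = True"
| "wf_trm ar (Fun f ts) = (length ts = ar f \<and> (\<forall>t\<in>set ts. wf_trm ar t))"

fun subst :: "(nat \<Rightarrow> 'f trm) \<Rightarrow> 'f trm \<Rightarrow> 'f trm" where
  "subst \<sigma> (Var x) = \<sigma> x"
| "subst \<sigma> (Fun f ts) = Fun f (map (subst \<sigma>) ts)"

definition wf_subst :: "('f \<Rightarrow> nat) \<Rightarrow> (nat \<Rightarrow> 'f trm) \<Rightarrow> bool" where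
  "wf_subst ar \<sigma> = (\<forall>x. wf_trm ar (\<sigma> x))"

text \<open>Equational theory of the variety V = Mod(E) (Birkhoff's equational logic):
  eqv ar E s t means that s = t holds in V.\<close>

inductive eqv :: "('f \<Rightarrow> nat) \<Rightarrow> ('f trm \<times> 'f trm) set \<Rightarrow> 'f trm \<Rightarrow> 'f trm \<Rightarrow> bool"
  for ar E where
  axiom: "(l, r) \<in> E \<Longrightarrow> wf_subst ar \<sigma> \<Longrightarrow> eqv ar E (subst \<sigma> l) (subst \<sigma> r)"
| refl: "wf_trm ar t \<Longrightarrow> eqv ar E t t"
| sym: "eqv ar E s t \<Longrightarrow> eqv ar E t s"
| trans: "eqv ar E s t \<Longrightarrow> eqv ar E t u \<Longrightarrow> eqv ar E s u"
| cong: "wf_trm ar (Fun f ts) \<Longrightarrow> i < length ts \<Longrightarrow> eqv ar E (ts ! i) u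
         \<Longrightarrow> eqv ar E (Fun f ts) (Fun f (ts[i := u]))"

definition variety :: "('f \<Rightarrow> nat) \<Rightarrow> ('f trm \<times> 'f trm) set \<Rightarrow> bool" where
  "variety ar E = (\<forall>(l, r)\<in>E. wf_trm ar l \<and> wf_trm ar r)"

definition gen_problem :: "('f \<Rightarrow> nat) \<Rightarrow> 'f trm multiset \<Rightarrow> bool" where
  "gen_problem ar T = (T \<noteq> {#} \<and> (\<forall>t\<in>#T. wf_trm ar t))"

definition generalizer ::
  "('f \<Rightarrow> nat) \<Rightarrow> ('f trm \<times> 'f trm) set \<Rightarrow> 'f trm multiset \<Rightarrow> 'f trm \<Rightarrow> bool" where
  "generalizer ar E T s = (wf_trm ar s \<and>
     (\<forall>t\<in>#T. \<exists>\<sigma>. wf_subst ar \<sigma> \<and> eqv ar E (subst \<sigma> s) t))"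

definition less_general ::
  "('f \<Rightarrow> nat) \<Rightarrow> ('f trm \<times> 'f trm) set \<Rightarrow> 'f trm \<Rightarrow> 'f trm \<Rightarrow> bool" where
  "less_general ar E s u = (\<exists>\<sigma>. wf_subst ar \<sigma> \<and> eqv ar E (subst \<sigma> u) s)"

text \<open>A minimal complete set of the poset of classes of solutions, given by a set M of
  representatives (one per class, pairwise incomparable).\<close>

definition minimal_complete ::
  "('f \<Rightarrow> nat) \<Rightarrow> ('f trm \<times> 'f trm) set \<Rightarrow> 'f trm multiset \<Rightarrow> 'f trm set \<Rightarrow> bool" where
  "minimal_complete ar E T M =
     (M \<subseteq> {s. generalizer ar E T s} \<and>
      (\<forall>p. generalizer ar E T p \<longrightarrow> (\<exists>a\<in>M. less_general ar E a p)) \<and>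
      (\<forall>a\<in>M. \<forall>b\<in>M. less_general ar E a b \<longrightarrow> a = b))"

definition unitary_problem ::
  "('f \<Rightarrow> nat) \<Rightarrow> ('f trm \<times> 'f trm) set \<Rightarrow> 'f trm multiset \<Rightarrow> bool" where
  "unitary_problem ar E T = (\<exists>M. minimal_complete ar E T M \<and> card M = 1)"

text \<open>Unitary is the best type, so the worst type among a family of problems is unitary
  iff every problem in the family is unitary.\<close>

definition unitary_mtype :: "('f \<Rightarrow> nat) \<Rightarrow> ('f trm \<times> 'f trm) set \<Rightarrow> nat \<Rightarrow> bool" where
  "unitary_mtype ar E m =
     (\<forall>T. gen_problem ar T \<and> size T \<le> m \<longrightarrow> unitary_problem ar E T)"

definition unitary_type :: "('f \<Rightarrow> nat) \<Rightarrow> ('f trm \<times> 'f trm) set \<Rightarrow> bool" where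
  "unitary_type ar E = (\<forall>T. gen_problem ar T \<longrightarrow> unitary_problem ar E T)"

end

theory Submission
  imports Defs
begin

text \<open>Unitarity of a problem means that it has a least general generalizer (lgg).
  If g is an lgg of T, then the generalizers of T + {x} are exactly those of {g, x},
  because a term generalizes every member of T iff it generalizes g. Hence an lgg of
  T + {x} is obtained as an lgg of the two-element problem {g, x}, and induction on T
  shows that every problem has an lgg.\<close>

lemma wf_trm_subst: "wf_subst ar \<sigma> \<Longrightarrow> wf_trm ar t \<Longrightarrow> wf_trm ar (subst \<sigma> t)"
  by (induction t) (auto simp: wf_subst_def)

lemma subst_subst: "subst \<tau> (subst \<sigma> t) = subst (\<lambda>x. subst \<tau> (\<sigma> x)) t"
  by (induction t) auto

lemma wf_subst_comp: "wf_subst ar \<tau> \<Longrightarrow> wf_subst ar \<sigma> \<Longrightarrow> wf_subst ar (\<lambda>x. subst \<tau> (\<sigma> x))"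
  by (auto simp: wf_subst_def intro: wf_trm_subst)

lemma eqv_subst: "eqv ar E s t \<Longrightarrow> wf_subst ar \<tau> \<Longrightarrow> eqv ar E (subst \<tau> s) (subst \<tau> t)"
proof (induction rule: eqv.induct)
  case (axiom l r \<sigma>)
  then show ?case
    using eqv.axiom[of l r E ar "\<lambda>x. subst \<tau> (\<sigma> x)"] by (simp add: subst_subst wf_subst_comp)
next
  case (refl t)
  then show ?case by (simp add: eqv.refl wf_trm_subst)
next
  case (sym s t)
  then show ?case by (simp add: eqv.sym)
next
  case (trans s t u)
  then show ?case by (meson eqv.trans)
next
  case (cong f ts i u)
  have "wf_trm ar (Fun f (map (subst \<tau>) ts))"
    using wf_trm_subst[OF cong.prems cong.hyps(1)] by simp
  then have "eqv ar E (Fun f (map (subst \<tau>) ts)) (Fun f ((map (subst \<tau>) ts)[i := subst \<tau> u]))"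
    by (rule eqv.cong) (use cong in simp_all)
  then show ?case by (simp add: map_update)
qed

lemma less_general_trans:
  assumes "less_general ar E s t" and "less_general ar E t u"
  shows "less_general ar E s u"
proof -
  obtain \<sigma> where \<sigma>: "wf_subst ar \<sigma>" "eqv ar E (subst \<sigma> t) s"
    using assms(1) unfolding less_general_def by blast
  obtain \<tau> where \<tau>: "wf_subst ar \<tau>" "eqv ar E (subst \<tau> u) t"
    using assms(2) unfolding less_general_def by blast
  have "eqv ar E (subst \<sigma> (subst \<tau> u)) (subst \<sigma> t)"
    using eqv_subst \<sigma>(1) \<tau>(2) by blast
  then have "eqv ar E (subst (\<lambda>x. subst \<sigma> (\<tau> x)) u) s"
    using \<sigma>(2) eqv.trans by (metis subst_subst)
  then show ?thesis
    unfolding less_general_def using wf_subst_comp[OF \<sigma>(1) \<tau>(1)] by blast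
qed

lemma generalizer_iff_less_general:
  "generalizer ar E T s \<longleftrightarrow> wf_trm ar s \<and> (\<forall>t\<in>#T. less_general ar E t s)"
  unfolding generalizer_def less_general_def by blast

definition lgg :: "('f \<Rightarrow> nat) \<Rightarrow> ('f trm \<times> 'f trm) set \<Rightarrow> 'f trm multiset \<Rightarrow> 'f trm \<Rightarrow> bool" where
  "lgg ar E T g \<longleftrightarrow>
     generalizer ar E T g \<and> (\<forall>p. generalizer ar E T p \<longrightarrow> less_general ar E g p)"

lemma unitary_problem_iff_lgg: "unitary_problem ar E T \<longleftrightarrow> (\<exists>g. lgg ar E T g)"
proof
  assume "unitary_problem ar E T"
  then obtain M where M: "minimal_complete ar E T M" "card M = 1"
    unfolding unitary_problem_def by blast
  then obtain g where "M = {g}"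
    using card_1_singletonE by blast
  with M(1) show "\<exists>g. lgg ar E T g"
    unfolding minimal_complete_def lgg_def by auto
next
  assume "\<exists>g. lgg ar E T g"
  then obtain g where "lgg ar E T g" ..
  then have "minimal_complete ar E T {g}"
    unfolding minimal_complete_def lgg_def by auto
  then show "unitary_problem ar E T"
    unfolding unitary_problem_def by force
qed

lemma subst_Var: "subst Var t = t"
  by (induction t) (auto intro: map_idI)

lemma lgg_singleton: "wf_trm ar x \<Longrightarrow> lgg ar E {#x#} x"
proof -
  assume "wf_trm ar x"
  then have "less_general ar E x x"
    unfolding less_general_def wf_subst_def by (metis eqv.refl subst_Var wf_trm.simps(1))
  then show ?thesis
    unfolding lgg_def generalizer_iff_less_general using \<open>wf_trm ar x\<close> by simp
qed

lemma generalizer_add_mset_lgg: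
  assumes "lgg ar E T g"
  shows "generalizer ar E (add_mset x T) p \<longleftrightarrow> generalizer ar E {#g, x#} p"
proof -
  have "generalizer ar E T p \<longleftrightarrow> wf_trm ar p \<and> less_general ar E g p"
    using assms less_general_trans
    unfolding lgg_def generalizer_iff_less_general by blast
  then show ?thesis
    unfolding generalizer_iff_less_general by auto
qed

lemma lgg_add_mset:
  assumes "lgg ar E T g"
  shows "lgg ar E (add_mset x T) h \<longleftrightarrow> lgg ar E {#g, x#} h"
  unfolding lgg_def by (simp add: generalizer_add_mset_lgg[OF assms])

lemma lgg_exists_add_mset:
  assumes "unitary_mtype ar E 2" and "wf_trm ar x" and "\<forall>t\<in>#T. wf_trm ar t"
  shows "\<exists>g. lgg ar E (add_mset x T) g"
  using assms(2,3)
proof (induction T arbitrary: x)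
  case empty
  then show ?case using lgg_singleton by blast
next
  case (add y T)
  then obtain g where g: "lgg ar E (add_mset x T) g"
    by auto
  have "gen_problem ar {#g, y#}"
    using g add.prems unfolding gen_problem_def lgg_def generalizer_def by auto
  then obtain h where "lgg ar E {#g, y#} h"
    using assms(1) unfolding unitary_mtype_def unitary_problem_iff_lgg by auto
  then have "lgg ar E (add_mset y (add_mset x T)) h"
    using lgg_add_mset[OF g] by blast
  then show ?case
    by (auto simp: add_mset_commute)
qed

theorem proposition2p7:
  fixes ar :: "'f \<Rightarrow> nat" and E :: "('f trm \<times> 'f trm) set"
  assumes "variety ar E"
    and "unitary_mtype ar E 2"
  shows "unitary_type ar E"
  unfolding unitary_type_def
proof (intro allI impI)
  fix T
  assume T: "gen_problem ar T"
  then obtain x where "x \<in># T"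
    unfolding gen_problem_def by (meson multiset_nonemptyE)
  then have "T = add_mset x (T - {#x#})"
    by simp
  moreover have "\<exists>g. lgg ar E (add_mset x (T - {#x#})) g"
    using lgg_exists_add_mset[OF assms(2)] T \<open>x \<in># T\<close>
    unfolding gen_problem_def by (meson in_diffD)
  ultimately show "unitary_problem ar E T"
    unfolding unitary_problem_iff_lgg by simp
qed

end
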